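(* Let $N=2$, $J=1$, $h_0=[0,1]^{\sf T}$, $h_1=[\cos\tau,z]^{\sf T}$ with $z=\sin\tau\,e^{i\phi_z}$, $\tau\in[0,\pi/2)$, $\phi_z\in[0,2\pi)$, $\sigma_0^2,\sigma_1^2,\sigma_n^2>0$, and $c_1=|c_1|e^{i\phi_c}$ with $|c_1|\le\sigma_0\sigma_1$, $\phi_c\in[0,2\pi)$. Then for every $\lambda\ge0$, \[ w_{\rm RZF}(\lambda)=\begin{bmatrix}-\dfrac{\cos\tau\,[(\sigma_1^2+\lambda)z^*+c_1]}{(\sigma_1^2+\lambda)\cos^2\tau+\sigma_n^2}\\[2mm] 1\end{bmatrix}, \] and \[ \mathrm{MSE}(\lambda)=\frac{|\delta_2|^2(\sigma_1^2\cos^2\tau+\sigma_n^2)}{g(\lambda)^2}-\frac{2\sigma_n^2\delta_1\tan\tau}{g(\lambda)}+\sigma_n^2(\tan^2\tau+1), \] with $g(\lambda):=\lambda\cos^2\tau+\sigma_1^2\cos^2\tau+\sigma_n^2$, $\delta_1:=\sigma_n^2\tan\tau-|c_1|\cos\tau\cos(\phi_c+\phi_z)$, $\delta_2:=\sigma_n^2\tan\tau-|c_1|\cos\tau\,e^{i(\phi_c+\phi_z)}$. Furthermore: (i) if $\delta_2=0$ (which implies $\delta_1=0$), $\mathrm{MSE}(\lambda)=\sigma_n^2(\tan^2\tau+1)$ for all $\lambda\ge0$; (ii) if $\delta_2\ne0$, let $\gamma:=\delta_1\sigma_n^2\tan\tau/|\delta_2|^2$: (a) if $\gamma\le0$ (equivalently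 $\delta_1\tan\tau\le0$), $\mathrm{MSE}(\lambda)$ is decreasing on $[0,\infty)$ and its infimum is $\lim_{\lambda\to\infty}\mathrm{MSE}(\lambda)$ (ZF optimal); (b) if $\gamma\ge1$, $\mathrm{MSE}(\lambda)$ is increasing and is minimized at $\lambda=0$; (c) if $\gamma\in(0,1)$, $\mathrm{MSE}$ is minimized over $[0,\infty)$ by $\lambda=\dfrac{\sigma_1^2\cos^2\tau+\sigma_n^2}{\cos^2\tau}\cdot\dfrac{1-\gamma}{\gamma}>0$.
   Context: Complex single-interference model: $y(k)=s_0(k)h_0+s_1(k)h_1+n(k)\in\mathbb{C}^N$, with zero-mean jointly weakly stationary complex signals $s_0,s_1$, $\sigma_j^2:=E|s_j(k)|^2$, $c_1:=E[s_0^*(k)s_1(k)]$, and noise $n(k)\sim\mathcal{CN}(0,\sigma_n^2I)$ uncorrelated with the signals. $R:=E[y(k)y(k)^{\sf H}]$. For $\lambda\ge0$, $R_\lambda:=R+\lambda h_1h_1^{\sf H}$ and the RZF beamformer is $w_{\rm RZF}(\lambda):=R_\lambda^{-1}h_0/(h_0^{\sf H}R_\lambda^{-1}h_0)$. The MSE of $w$ is $J_{\rm MSE}(w):=E|w^{\sf H}y(k)-s_0(k)|^2$, and $\mathrm{MSE}(\lambda):=J_{\rm MSE}(w_{\rm RZF}(\lambda))$. *)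

theory Defs
  imports "HOL-Analysis.Analysis"
begin

text \<open>Complex single-interference model y(k) = s0(k) h0 + s1(k) h1 + n(k) in C^N,
  described through its second-order statistics: sig0sq = E|s0|^2, sig1sq = E|s1|^2,
  c1 = E[conj s0 * s1], noise covariance signsq * I, noise uncorrelated with signals.\<close>

definition hdot :: "complex^'n \<Rightarrow> complex^'n \<Rightarrow> complex" where
  "hdot v w = (\<Sum>i\<in>UNIV. cnj (v $ i) * w $ i)"

definition outer :: "complex^'n \<Rightarrow> complex^'n \<Rightarrow> complex^'n^'n" where
  "outer a b = (\<chi> i j. a $ i * cnj (b $ j))"

text \<open>R = E[y y^H] = sig0sq h0 h0^H + sig1sq h1 h1^H + conj(c1) h0 h1^H + c1 h1 h0^H + signsq I\<close>
definition Rcov :: "real \<Rightarrow> real \<Rightarrow> complex \<Rightarrow> real \<Rightarrow> complex^'n \<Rightarrow> complex^'n \<Rightarrow> complex^'n^'n" where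
  "Rcov sig0sq sig1sq c1 signsq h0 h1 =
     (\<chi> i j. of_real sig0sq * outer h0 h0 $ i $ j + of_real sig1sq * outer h1 h1 $ i $ j
            + cnj c1 * outer h0 h1 $ i $ j + c1 * outer h1 h0 $ i $ j
            + (if i = j then of_real signsq else 0))"

definition Rlam :: "real \<Rightarrow> real \<Rightarrow> complex \<Rightarrow> real \<Rightarrow> complex^'n \<Rightarrow> complex^'n \<Rightarrow> real \<Rightarrow> complex^'n^'n" where
  "Rlam sig0sq sig1sq c1 signsq h0 h1 l =
     Rcov sig0sq sig1sq c1 signsq h0 h1 + (\<chi> i j. of_real l * outer h1 h1 $ i $ j)"

definition w_RZF :: "real \<Rightarrow> real \<Rightarrow> complex \<Rightarrow> real \<Rightarrow> complex^'n \<Rightarrow> complex^'n \<Rightarrow> real \<Rightarrow> complex^'n" where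
  "w_RZF sig0sq sig1sq c1 signsq h0 h1 l =
     (let v = matrix_inv (Rlam sig0sq sig1sq c1 signsq h0 h1 l) *v h0
      in (1 / hdot h0 v) *s v)"

text \<open>J_MSE(w) = E|w^H y - s0|^2 = w^H R w - 2 Re(w^H E[y conj s0]) + sig0sq,
  where E[y conj s0] = sig0sq h0 + c1 h1.\<close>
definition J_MSE :: "real \<Rightarrow> real \<Rightarrow> complex \<Rightarrow> real \<Rightarrow> complex^'n \<Rightarrow> complex^'n \<Rightarrow> complex^'n \<Rightarrow> real" where
  "J_MSE sig0sq sig1sq c1 signsq h0 h1 w =
     Re (hdot w (Rcov sig0sq sig1sq c1 signsq h0 h1 *v w))
     - 2 * Re (hdot w (of_real sig0sq *s h0 + c1 *s h1)) + sig0sq"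

end

theory Submission
  imports Defs
begin

text \<open>With \<open>h0 = e\<^sub>2\<close> the distortionless constraint \<open>h0\<^sup>H w = 1\<close> forces \<open>w = (a, 1)\<close>, and
  \<open>R\<^sub>\<lambda> w \<parallel> h0\<close> is a single linear equation for \<open>a\<close>; this gives the RZF beamformer.
  On the constraint set the cross-correlation terms cancel and
  \<open>MSE = \<sigma>\<^sub>1\<^sup>2 |h1\<^sup>H w|\<^sup>2 + \<sigma>\<^sub>n\<^sup>2 \<parallel>w\<parallel>\<^sup>2\<close>; written with \<open>\<delta>\<^sub>2\<close> this is a quadratic in
  \<open>x = 1 / g(\<lambda>)\<close> with vertex at \<open>x = \<gamma> / g(0)\<close>. As \<open>\<lambda>\<close> runs through \<open>[0, \<infinity>)\<close>, \<open>x\<close> decreases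
  through \<open>(0, 1 / g(0)]\<close>, so the position of the vertex relative to this interval decides
  whether the MSE decreases, increases, or is minimised where \<open>g(\<lambda>) = g(0) / \<gamma>\<close>.\<close>

lemma hdot_add_right: "hdot u (v + w) = hdot u v + hdot u w"
  by (simp add: hdot_def distrib_left sum.distrib)

lemma hdot_scale_right: "hdot u (a *s v) = a * hdot u v"
  by (simp add: hdot_def sum_distrib_left mult.left_commute)

lemma hdot_cnj_commute: "hdot v w = cnj (hdot w v)"
  by (simp add: hdot_def mult.commute)

lemma hdot_self: "hdot w w = of_real ((norm w)\<^sup>2)"
  by (simp add: hdot_def norm_vec_def L2_set_def sum_nonneg complex_norm_square mult.commute
      del: of_real_power)

lemma Rcov_mult_vec:
  "Rcov P S c1 N h0 h1 *v w =
     (of_real P * hdot h0 w + cnj c1 * hdot h1 w) *s h0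
   + (of_real S * hdot h1 w + c1 * hdot h0 w) *s h1 + of_real N *s w"
  by (simp add: vec_eq_iff Rcov_def matrix_vector_mult_def hdot_def sum.distrib sum_distrib_left
      outer_def algebra_simps if_distrib[of "(*) _"] cong: if_cong)

lemma Rlam_eq_Rcov: "Rlam P S c1 N h0 h1 l = Rcov P (S + l) c1 N h0 h1"
  by (simp add: Rlam_def Rcov_def vec_eq_iff algebra_simps)

lemma J_MSE_distortionless:
  assumes "hdot h0 w = 1"
  shows "J_MSE P S c1 N h0 h1 w = S * (cmod (hdot h1 w))\<^sup>2 + N * (norm w)\<^sup>2"
proof -
  have w_h0: "hdot w h0 = 1" using assms hdot_cnj_commute[of w h0] by simp
  define x where "x = hdot h1 w"
  have w_h1: "hdot w h1 = cnj x" unfolding x_def by (rule hdot_cnj_commute)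
  have "hdot w (Rcov P S c1 N h0 h1 *v w)
      = of_real (P + S * (cmod x)\<^sup>2 + N * (norm w)\<^sup>2) + (c1 * cnj x + cnj (c1 * cnj x))"
    by (simp add: Rcov_mult_vec hdot_add_right hdot_scale_right hdot_self assms w_h0 w_h1
        flip: x_def complex_norm_square)
  moreover have "hdot w (of_real P *s h0 + c1 *s h1) = of_real P + c1 * cnj x"
    by (simp add: hdot_add_right hdot_scale_right w_h0 w_h1)
  ultimately show ?thesis
    unfolding J_MSE_def x_def[symmetric] by (simp add: complex_add_cnj)
qed

lemma normalized_inverse_eq:
  fixes R :: "complex^'n^'n"
  assumes "invertible R" and "R *v w = mu *s h" and "hdot h w = 1"
  shows "(let v = matrix_inv R *v h in (1 / hdot h v) *s v) = w"
proof -
  have "matrix_inv R ** R = mat 1"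
    using assms(1) unfolding invertible_def matrix_inv_def by (rule someI2_ex) blast
  then have "matrix_inv R *v (R *v w) = w"
    by (simp add: matrix_vector_mul_assoc)
  then have inv_h: "mu *s (matrix_inv R *v h) = w"
    using assms(2) by (simp add: matrix_vector_mult_scaleR vector_scalar_commute)
  then have "mu \<noteq> 0" using assms(3) by (auto simp: hdot_def)
  with inv_h have "matrix_inv R *v h = (1 / mu) *s w"
    by auto
  then show ?thesis using assms(3) \<open>mu \<noteq> 0\<close> by (simp add: Let_def hdot_scale_right)
qed

lemma double_le_add_if_sq_le_mult:
  fixes r x y :: real
  assumes "0 \<le> x" "0 \<le> y" "r\<^sup>2 \<le> x * y"
  shows "2 * r \<le> x + y"
proof -
  have "(2 * r)\<^sup>2 \<le> (x + y)\<^sup>2"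
    using assms(3) sum_squares_bound[of x y] by (simp add: power2_eq_square algebra_simps)
  then show ?thesis by (rule power2_le_imp_le) (use assms(1,2) in linarith)
qed

lemma Rcov_quadratic_form_ge:
  assumes "0 \<le> P" "0 \<le> S" "(cmod c1)\<^sup>2 \<le> P * S"
  shows "N * (norm v)\<^sup>2 \<le> Re (hdot v (Rcov P S c1 N h0 h1 *v v))"
proof -
  define a b where "a = hdot h0 v" and "b = hdot h1 v"
  have "Re (hdot v (Rcov P S c1 N h0 h1 *v v))
      = P * (cmod a)\<^sup>2 + S * (cmod b)\<^sup>2 + 2 * Re (c1 * a * cnj b) + N * (norm v)\<^sup>2"
  proof -
    have "hdot v (Rcov P S c1 N h0 h1 *v v)
        = of_real P * (a * cnj a) + of_real S * (b * cnj b) + of_real N * of_real ((norm v)\<^sup>2)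
          + (c1 * a * cnj b + cnj (c1 * a * cnj b))"
      by (simp add: Rcov_mult_vec hdot_add_right hdot_scale_right hdot_self
          hdot_cnj_commute[of v h0] hdot_cnj_commute[of v h1] flip: a_def b_def)
    then show ?thesis by (simp add: complex_add_cnj complex_mult_cnj cmod_power2 algebra_simps)
  qed
  moreover have "- 2 * Re (c1 * a * cnj b) \<le> P * (cmod a)\<^sup>2 + S * (cmod b)\<^sup>2"
  proof -
    have "(cmod c1 * cmod a * cmod b)\<^sup>2 \<le> (P * (cmod a)\<^sup>2) * (S * (cmod b)\<^sup>2)"
      using mult_right_mono[OF assms(3), of "(cmod a)\<^sup>2 * (cmod b)\<^sup>2"]
      by (simp add: power_mult_distrib mult_ac)
    then have "2 * (cmod c1 * cmod a * cmod b) \<le> P * (cmod a)\<^sup>2 + S * (cmod b)\<^sup>2"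
      using assms(1,2) by (intro double_le_add_if_sq_le_mult) auto
    moreover have "- Re (c1 * a * cnj b) \<le> cmod c1 * cmod a * cmod b"
      using abs_Re_le_cmod[of "c1 * a * cnj b"] by (simp add: norm_mult)
    ultimately show ?thesis by linarith
  qed
  ultimately show ?thesis by linarith
qed

lemma Rcov_invertible:
  assumes "0 \<le> P" "0 \<le> S" "(cmod c1)\<^sup>2 \<le> P * S" "0 < N"
  shows "invertible (Rcov P S c1 N h0 h1)"
  unfolding invertible_left_inverse matrix_left_invertible_ker
proof (intro allI impI)
  fix v assume "Rcov P S c1 N h0 h1 *v v = 0"
  then have "N * (norm v)\<^sup>2 \<le> 0"
    using Rcov_quadratic_form_ge[OF assms(1-3), of N v h0 h1] by (simp add: hdot_def)
  then show "v = 0" using \<open>0 < N\<close> by (simp add: mult_le_0_iff)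
qed

lemma hdot_2: "hdot (v :: complex^2) w = cnj (v$1) * w$1 + cnj (v$2) * w$2"
  by (simp add: hdot_def sum_2)

lemma norm_vec_2_sq: "(norm (v :: complex^2))\<^sup>2 = (cmod (v$1))\<^sup>2 + (cmod (v$2))\<^sup>2"
  by (simp add: norm_vec_def L2_set_def sum_2)

lemma w_RZF_2:
  fixes c P S N l :: real and z c1 :: complex
  assumes "0 \<le> P" "0 \<le> S" "(cmod c1)\<^sup>2 \<le> P * S" "0 < N" "0 \<le> l"
  shows "w_RZF P S c1 N (vector [0, 1] :: complex^2) (vector [of_real c, z]) l =
    vector [- (of_real c * (of_real (S + l) * cnj z + c1)) / of_real ((S + l) * c\<^sup>2 + N), 1]"
proof -
  define a where "a = - (of_real c * (of_real (S + l) * cnj z + c1)) / of_real ((S + l) * c\<^sup>2 + N)"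
  define w :: "complex^2" where "w = vector [a, 1]"
  let ?R = "Rcov P (S + l) c1 N (vector [0, 1] :: complex^2) (vector [of_real c, z])"
  have "0 < (S + l) * c\<^sup>2 + N" using assms by (simp add: add_nonneg_pos)
  then have "a * of_real ((S + l) * c\<^sup>2 + N) = - (of_real c * (of_real (S + l) * cnj z + c1))"
    unfolding a_def by (simp del: of_real_add of_real_mult of_real_power)
  then have "(?R *v w) $ 1 = 0"
    by (simp add: Rcov_mult_vec hdot_2 w_def algebra_simps power2_eq_square)
  then have "?R *v w = ((?R *v w) $ 2) *s vector [0, 1]"
    by (simp add: vec_eq_iff forall_2)
  moreover have "invertible ?R"
    using assms mult_left_mono[of S "S + l" P] by (intro Rcov_invertible) auto
  ultimately have "w_RZF P S c1 N (vector [0, 1]) (vector [of_real c, z]) l = w"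
    unfolding w_RZF_def Rlam_eq_Rcov by (intro normalized_inverse_eq) (auto simp: hdot_2 w_def)
  then show ?thesis by (simp add: w_def a_def)
qed

lemma J_MSE_2:
  fixes c G S S1 N P :: real and z c1 d :: complex
  assumes "c \<noteq> 0" "G = S * c\<^sup>2 + N" "G \<noteq> 0" "d = of_real N * cnj z - of_real (c\<^sup>2) * c1"
  shows "J_MSE P S1 c1 N (vector [0, 1] :: complex^2) (vector [of_real c, z])
           (vector [- (of_real c * (of_real S * cnj z + c1)) / of_real G, 1])
       = S1 * (cmod d)\<^sup>2 / G\<^sup>2 + N * ((cmod d)\<^sup>2 / G\<^sup>2 - 2 * Re (z * d) / G + (cmod z)\<^sup>2) / c\<^sup>2 + N"
proof -
  define a where "a = - (of_real c * (of_real S * cnj z + c1)) / of_real G"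
  have G0: "(of_real G :: complex) \<noteq> 0" using assms(3) by simp
  have "of_real c * a * of_real G = - (of_real (c\<^sup>2) * (of_real S * cnj z + c1))"
    using G0 by (simp add: a_def power2_eq_square)
  also have "\<dots> = d - cnj z * of_real G"
    using assms(2,4) by (simp add: algebra_simps power2_eq_square)
  finally have c_a: "of_real c * a = d / of_real G - cnj z"
    using G0 by (simp add: eq_divide_eq algebra_simps)
  then have h1_w: "of_real c * a + cnj z = d / of_real G"
    by simp
  have "(cmod a)\<^sup>2 = (cmod (d / of_real G - cnj z))\<^sup>2 / c\<^sup>2"
    using assms(1) c_a[symmetric] by (simp add: norm_mult power_mult_distrib)
  also have "(cmod (d / of_real G - cnj z))\<^sup>2 = (Re d / G - Re z)\<^sup>2 + (Im d / G + Im z)\<^sup>2"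
    by (simp add: cmod_power2)
  also have "\<dots> = (cmod d)\<^sup>2 / G\<^sup>2 - 2 * Re (z * d) / G + (cmod z)\<^sup>2"
    unfolding cmod_power2 using assms(3) by (simp add: power2_eq_square field_simps)
  finally have a_sq: "(cmod a)\<^sup>2 = ((cmod d)\<^sup>2 / G\<^sup>2 - 2 * Re (z * d) / G + (cmod z)\<^sup>2) / c\<^sup>2" .
  have "J_MSE P S1 c1 N (vector [0, 1] :: complex^2) (vector [of_real c, z]) (vector [a, 1])
      = S1 * (cmod (of_real c * a + cnj z))\<^sup>2 + N * ((cmod a)\<^sup>2 + 1)"
    by (simp add: J_MSE_distortionless hdot_2 norm_vec_2_sq)
  then show ?thesis
    unfolding a_def[symmetric] h1_w a_sq by (simp add: norm_divide power_divide algebra_simps)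
qed

lemma J_MSE_w_RZF_closed_form:
  fixes tau phiz phic rho P S1 N l :: real and z c1 :: complex
  assumes "\<bar>tau\<bar> < pi / 2" "0 \<le> sin tau"
    and "0 \<le> P" "0 \<le> S1" "(cmod c1)\<^sup>2 \<le> P * S1" "0 < N" "0 \<le> l"
    and "z = of_real (sin tau) * cis phiz" "c1 = of_real rho * cis phic"
  defines "g \<equiv> l * (cos tau)\<^sup>2 + S1 * (cos tau)\<^sup>2 + N"
    and "\<delta>\<^sub>1 \<equiv> N * tan tau - rho * cos tau * cos (phic + phiz)"
    and "\<delta>\<^sub>2 \<equiv> of_real (N * tan tau) - of_real (rho * cos tau) * cis (phic + phiz)"
  shows "J_MSE P S1 c1 N (vector [0, 1] :: complex^2) (vector [of_real (cos tau), z])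
           (w_RZF P S1 c1 N (vector [0, 1]) (vector [of_real (cos tau), z]) l)
       = (cmod \<delta>\<^sub>2)\<^sup>2 * (S1 * (cos tau)\<^sup>2 + N) / g\<^sup>2 - 2 * N * \<delta>\<^sub>1 * tan tau / g
         + N * ((tan tau)\<^sup>2 + 1)"
proof -
  define c s where "c = cos tau" and "s = sin tau"
  define d where "d = of_real N * cnj z - of_real (c\<^sup>2) * c1"
  have "0 < c" unfolding c_def using assms(1) by (intro cos_gt_zero_pi) auto
  have tan: "tan tau = s / c" by (simp add: c_def s_def tan_def)
  have g: "g = (S1 + l) * c\<^sup>2 + N" by (simp add: g_def c_def algebra_simps)
  have "0 < g" using assms(4,6,7) unfolding g by (simp add: add_nonneg_pos)
  \<comment> \<open>the phase \<open>cis (- phiz)\<close> drops out of both \<open>cmod d\<close> and \<open>z * d\<close>\<close>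
  have d: "d = cis (- phiz) * of_real c * \<delta>\<^sub>2"
    using \<open>0 < c\<close>
    by (simp add: d_def \<delta>\<^sub>2_def assms(8,9) tan cis_cnj cis_mult algebra_simps power2_eq_square
        flip: c_def s_def)
  have w_eq: "w_RZF P S1 c1 N (vector [0, 1] :: complex^2) (vector [of_real c, z]) l
      = vector [- (of_real c * (of_real (S1 + l) * cnj z + c1)) / of_real g, 1]"
    using w_RZF_2[OF assms(3-7)] by (simp add: g)
  have "J_MSE P S1 c1 N (vector [0, 1] :: complex^2) (vector [of_real c, z])
      (w_RZF P S1 c1 N (vector [0, 1]) (vector [of_real c, z]) l)
      = S1 * (cmod d)\<^sup>2 / g\<^sup>2 + N * ((cmod d)\<^sup>2 / g\<^sup>2 - 2 * Re (z * d) / g + (cmod z)\<^sup>2) / c\<^sup>2 + N"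
    unfolding w_eq by (rule J_MSE_2[OF _ g _ d_def]) (use \<open>0 < c\<close> \<open>0 < g\<close> in auto)
  also have "cmod d = c * cmod \<delta>\<^sub>2" using \<open>0 < c\<close> by (simp add: d norm_mult)
  also have "Re (z * d) = s * c * \<delta>\<^sub>1"
  proof -
    have "z * d = of_real (s * c) * (cis phiz * cis (- phiz)) * \<delta>\<^sub>2"
      by (simp add: d assms(8) s_def mult_ac)
    then show ?thesis by (simp add: cis_mult \<delta>\<^sub>1_def \<delta>\<^sub>2_def)
  qed
  also have "cmod z = s" using assms(2) by (simp add: assms(8) norm_mult s_def)
  finally show ?thesis
    unfolding c_def[symmetric] tan
    by (rule trans) (use \<open>0 < c\<close> \<open>0 < g\<close> in \<open>simp add: field_simps power2_eq_square\<close>)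
qed

lemma INF_atLeast_eq_tendsto_at_top:
  fixes f :: "real \<Rightarrow> real"
  assumes antimono: "\<And>x y. a \<le> x \<Longrightarrow> x \<le> y \<Longrightarrow> f y \<le> f x"
    and lim: "(f \<longlongrightarrow> L) at_top"
  shows "(INF x\<in>{a..}. f x) = L"
proof (rule antisym)
  have lower: "L \<le> f x" if "a \<le> x" for x
  proof -
    have "\<forall>\<^sub>F y in at_top. f y \<le> f x"
      using eventually_ge_at_top[of x] by eventually_elim (rule antimono[OF that])
    then show ?thesis by (rule tendsto_le[OF trivial_limit_at_top_linorder tendsto_const lim])
  qed
  show "L \<le> (INF x\<in>{a..}. f x)"
    by (rule cINF_greatest) (auto intro: lower)
  have bdd: "bdd_below (f ` {a..})"
    by (auto intro: bdd_belowI[of _ L] lower)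
  have "\<forall>\<^sub>F y in at_top. (INF x\<in>{a..}. f x) \<le> f y"
    using eventually_ge_at_top[of a] by eventually_elim (auto intro: cINF_lower[OF bdd])
  then show "(INF x\<in>{a..}. f x) \<le> L"
    by (rule tendsto_le[OF trivial_limit_at_top_linorder lim tendsto_const])
qed

text \<open>For the MSE, \<open>D = |\<delta>\<^sub>2|\<^sup>2\<close>, \<open>k = cos\<^sup>2 \<tau>\<close>, \<open>g0 = \<sigma>\<^sub>1\<^sup>2 cos\<^sup>2 \<tau> + \<sigma>\<^sub>n\<^sup>2\<close>,
  \<open>C = \<sigma>\<^sub>n\<^sup>2 (tan\<^sup>2 \<tau> + 1)\<close> and \<open>\<gamma>\<close> is the paper's \<open>\<gamma>\<close>.\<close>

locale quadratic_in_reciprocal =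
  fixes D \<gamma> C g0 k :: real
  assumes D_pos: "0 < D" and g0_pos: "0 < g0" and k_pos: "0 < k"
begin

definition q :: "real \<Rightarrow> real" where
  "q l = D * g0 / (k * l + g0)\<^sup>2 - 2 * \<gamma> * D / (k * l + g0) + C"

lemma q_eq: "q l = D * g0 * (1 / (k * l + g0))\<^sup>2 - 2 * \<gamma> * D * (1 / (k * l + g0)) + C"
  by (simp add: q_def power_divide)

lemma q_diff:
  "q x - q y = D * (1 / (k * x + g0) - 1 / (k * y + g0))
                 * (g0 * (1 / (k * x + g0) + 1 / (k * y + g0)) - 2 * \<gamma>)"
  unfolding q_eq by (simp add: power2_eq_square algebra_simps)

lemma q_vertex_form: "q l = D * g0 * (1 / (k * l + g0) - \<gamma> / g0)\<^sup>2 + C - D * \<gamma>\<^sup>2 / g0"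
proof -
  have "D * g0 * u\<^sup>2 - 2 * \<gamma> * D * u + C = D * g0 * (u - \<gamma> / g0)\<^sup>2 + C - D * \<gamma>\<^sup>2 / g0" for u
    using g0_pos by (simp add: power2_eq_square field_simps)
  then show ?thesis unfolding q_eq .
qed

lemma reciprocal_bounds:
  assumes "0 \<le> x" "x < y"
  shows "0 < 1 / (k * y + g0)" "1 / (k * y + g0) < 1 / (k * x + g0)" "1 / (k * x + g0) \<le> 1 / g0"
proof -
  have "0 < k * x + g0" "k * x + g0 < k * y + g0" "g0 \<le> k * x + g0"
    using assms k_pos g0_pos by (simp_all add: add_nonneg_pos)
  then show "0 < 1 / (k * y + g0)" "1 / (k * y + g0) < 1 / (k * x + g0)" "1 / (k * x + g0) \<le> 1 / g0"
    using g0_pos by (simp_all add: frac_less2 frac_le)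
qed

lemma q_strict_antimono:
  assumes "\<gamma> \<le> 0" "0 \<le> x" "x < y"
  shows "q y < q x"
proof -
  note r = reciprocal_bounds[OF assms(2,3)]
  have "0 < g0 * (1 / (k * x + g0) + 1 / (k * y + g0)) - 2 * \<gamma>"
    using r assms(1) g0_pos by (smt (verit) mult_pos_pos)
  then have "0 < q x - q y"
    unfolding q_diff using D_pos r by simp
  then show ?thesis by simp
qed

lemma q_strict_mono:
  assumes "1 \<le> \<gamma>" "0 \<le> x" "x < y"
  shows "q x < q y"
proof -
  note r = reciprocal_bounds[OF assms(2,3)]
  have "g0 * (1 / (k * x + g0) + 1 / (k * y + g0)) < g0 * (2 / g0)"
    using r g0_pos by (intro mult_strict_left_mono) auto
  then have "g0 * (1 / (k * x + g0) + 1 / (k * y + g0)) - 2 * \<gamma> < 0"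
    using assms(1) g0_pos by simp
  then have "q x - q y < 0"
    unfolding q_diff using D_pos r by (simp add: mult_pos_neg)
  then show ?thesis by simp
qed

lemma q_tendsto_at_top: "(q \<longlongrightarrow> C) at_top"
proof -
  have "filterlim (\<lambda>l. g0 + k * l) at_top at_top"
    using k_pos by (intro filterlim_tendsto_add_at_top[OF tendsto_const]
        filterlim_tendsto_pos_mult_at_top[OF tendsto_const _ filterlim_ident])
  then have "filterlim (\<lambda>l. k * l + g0) at_top at_top"
    by (simp add: add.commute)
  then have "((\<lambda>l. 1 / (k * l + g0)) \<longlongrightarrow> 0) at_top"
    by (intro tendsto_divide_0[OF tendsto_const] filterlim_at_top_imp_at_infinity)
  then have "((\<lambda>l. D * g0 * (1 / (k * l + g0))\<^sup>2 - 2 * \<gamma> * D * (1 / (k * l + g0)) + C)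
               \<longlongrightarrow> D * g0 * 0\<^sup>2 - 2 * \<gamma> * D * 0 + C) at_top"
    by (intro tendsto_intros)
  then show ?thesis by (simp add: q_eq[abs_def])
qed

lemma q_minimum:
  assumes "0 < \<gamma>" "\<gamma> < 1"
  defines "l\<^sub>o\<^sub>p\<^sub>t \<equiv> g0 / k * ((1 - \<gamma>) / \<gamma>)"
  shows "0 < l\<^sub>o\<^sub>p\<^sub>t" and "q l\<^sub>o\<^sub>p\<^sub>t \<le> q l"
proof -
  show "0 < l\<^sub>o\<^sub>p\<^sub>t" using assms g0_pos k_pos by (simp add: l\<^sub>o\<^sub>p\<^sub>t_def)
  have "k * l\<^sub>o\<^sub>p\<^sub>t + g0 = g0 / \<gamma>"
    using assms(1) k_pos by (simp add: l\<^sub>o\<^sub>p\<^sub>t_def field_simps)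
  then show "q l\<^sub>o\<^sub>p\<^sub>t \<le> q l"
    unfolding q_vertex_form[of l] q_vertex_form[of l\<^sub>o\<^sub>p\<^sub>t]
    using assms(1) g0_pos D_pos by simp
qed


lemma monotonicity_trichotomy:
  assumes f_eq: "\<And>l. 0 \<le> l \<Longrightarrow> f l = q l"
  shows "(\<gamma> \<le> 0 \<longrightarrow> (\<forall>x y. 0 \<le> x \<longrightarrow> x < y \<longrightarrow> f y < f x)
                     \<and> (f \<longlongrightarrow> (INF l\<in>{0..}. f l)) at_top)
       \<and> (\<gamma> \<ge> 1 \<longrightarrow> (\<forall>x y. 0 \<le> x \<longrightarrow> x < y \<longrightarrow> f x < f y) \<and> (\<forall>l\<ge>0. f 0 \<le> f l))
       \<and> (0 < \<gamma> \<and> \<gamma> < 1 \<longrightarrow>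
            (let l\<^sub>o\<^sub>p\<^sub>t = g0 / k * ((1 - \<gamma>) / \<gamma>) in l\<^sub>o\<^sub>p\<^sub>t > 0 \<and> (\<forall>l\<ge>0. f l\<^sub>o\<^sub>p\<^sub>t \<le> f l)))"
proof (intro conjI impI)
  have "\<forall>\<^sub>F l in at_top. q l = f l"
    using eventually_ge_at_top[of 0] by eventually_elim (simp add: f_eq)
  then have lim: "(f \<longlongrightarrow> C) at_top"
    using q_tendsto_at_top by (simp add: tendsto_cong)
  assume "\<gamma> \<le> 0"
  then show dec: "\<forall>x y. 0 \<le> x \<longrightarrow> x < y \<longrightarrow> f y < f x"
    using q_strict_antimono f_eq by simp
  then have "(INF l\<in>{0..}. f l) = C"
    using lim by (intro INF_atLeast_eq_tendsto_at_top) (auto simp: le_less)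
  with lim show "(f \<longlongrightarrow> (INF l\<in>{0..}. f l)) at_top" by simp
next
  assume "1 \<le> \<gamma>"
  then show inc: "\<forall>x y. 0 \<le> x \<longrightarrow> x < y \<longrightarrow> f x < f y"
    using q_strict_mono f_eq by simp
  then show "\<forall>l\<ge>0. f 0 \<le> f l"
    by (auto simp: le_less)
next
  assume "0 < \<gamma> \<and> \<gamma> < 1"
  then show "let l\<^sub>o\<^sub>p\<^sub>t = g0 / k * ((1 - \<gamma>) / \<gamma>) in l\<^sub>o\<^sub>p\<^sub>t > 0 \<and> (\<forall>l\<ge>0. f l\<^sub>o\<^sub>p\<^sub>t \<le> f l)"
    using q_minimum f_eq less_imp_le by (simp add: Let_def)
qed

end

theorem lemma3:
  fixes tau phiz phic sig0 sig1 sign rho :: real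
    and z c1 :: complex and h0 h1 :: "complex^2"
    and MSE :: "real \<Rightarrow> real" and g :: "real \<Rightarrow> real"
    and delta1 gamma :: real and delta2 :: complex
  assumes tau: "0 \<le> tau" "tau < pi / 2"
    and phiz: "0 \<le> phiz" "phiz < 2 * pi"
    and phic: "0 \<le> phic" "phic < 2 * pi"
    and sig: "sig0 > 0" "sig1 > 0" "sign > 0"
    and rho: "0 \<le> rho" "rho \<le> sig0 * sig1"
    and z_def: "z = of_real (sin tau) * cis phiz"
    and c1_def: "c1 = of_real rho * cis phic"
    and h0_def: "h0 = vector [0, 1]"
    and h1_def: "h1 = vector [of_real (cos tau), z]"
    and MSE_def: "MSE = (\<lambda>l. J_MSE (sig0^2) (sig1^2) c1 (sign^2) h0 h1
                                  (w_RZF (sig0^2) (sig1^2) c1 (sign^2) h0 h1 l))"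
    and g_def: "g = (\<lambda>l. l * (cos tau)^2 + sig1^2 * (cos tau)^2 + sign^2)"
    and delta1_def: "delta1 = sign^2 * tan tau - rho * cos tau * cos (phic + phiz)"
    and delta2_def: "delta2 = of_real (sign^2 * tan tau) - of_real (rho * cos tau) * cis (phic + phiz)"
    and gamma_def: "gamma = delta1 * sign^2 * tan tau / (cmod delta2)^2"
  shows
    "(\<forall>l\<ge>0. w_RZF (sig0^2) (sig1^2) c1 (sign^2) h0 h1 l =
        vector [- (of_real (cos tau) * (of_real (sig1^2 + l) * cnj z + c1))
                  / of_real ((sig1^2 + l) * (cos tau)^2 + sign^2), 1])
   \<and> (\<forall>l\<ge>0. MSE l = (cmod delta2)^2 * (sig1^2 * (cos tau)^2 + sign^2) / (g l)^2
                     - 2 * sign^2 * delta1 * tan tau / g l + sign^2 * ((tan tau)^2 + 1))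
   \<and> (delta2 = 0 \<longrightarrow> delta1 = 0 \<and> (\<forall>l\<ge>0. MSE l = sign^2 * ((tan tau)^2 + 1)))
   \<and> (delta2 \<noteq> 0 \<longrightarrow>
        (gamma \<le> 0 \<longleftrightarrow> delta1 * tan tau \<le> 0)
      \<and> (gamma \<le> 0 \<longrightarrow>
           (\<forall>x y. 0 \<le> x \<longrightarrow> x < y \<longrightarrow> MSE y < MSE x)
         \<and> (MSE \<longlongrightarrow> (INF l\<in>{0..}. MSE l)) at_top)
      \<and> (gamma \<ge> 1 \<longrightarrow>
           (\<forall>x y. 0 \<le> x \<longrightarrow> x < y \<longrightarrow> MSE x < MSE y)
         \<and> (\<forall>l\<ge>0. MSE 0 \<le> MSE l))
      \<and> (0 < gamma \<and> gamma < 1 \<longrightarrow>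
           (let lopt = (sig1^2 * (cos tau)^2 + sign^2) / (cos tau)^2 * ((1 - gamma) / gamma)
            in lopt > 0 \<and> (\<forall>l\<ge>0. MSE lopt \<le> MSE l))))"
proof -
  have trig: "\<bar>tau\<bar> < pi / 2" "0 \<le> sin tau" "0 < cos tau"
    using tau by (auto intro: sin_ge_zero cos_gt_zero_pi)
  have cov: "(cmod c1)\<^sup>2 \<le> sig0\<^sup>2 * sig1\<^sup>2"
    using rho by (simp add: c1_def norm_mult power_mono flip: power_mult_distrib)
  have w: "\<forall>l\<ge>0. w_RZF (sig0^2) (sig1^2) c1 (sign^2) h0 h1 l =
        vector [- (of_real (cos tau) * (of_real (sig1^2 + l) * cnj z + c1))
                  / of_real ((sig1^2 + l) * (cos tau)^2 + sign^2), 1]"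
    using cov sig by (simp add: w_RZF_2 h0_def h1_def)
  have mse: "\<forall>l\<ge>0. MSE l = (cmod delta2)^2 * (sig1^2 * (cos tau)^2 + sign^2) / (g l)^2
                     - 2 * sign^2 * delta1 * tan tau / g l + sign^2 * ((tan tau)^2 + 1)"
    using J_MSE_w_RZF_closed_form[OF trig(1,2) _ _ cov _ _ z_def c1_def] sig
    by (simp add: MSE_def h0_def h1_def g_def delta1_def delta2_def)
  show ?thesis
  proof (cases "delta2 = 0")
    case True
    then have "delta1 = 0" by (simp add: delta1_def delta2_def complex_eq_iff)
    with True show ?thesis using w mse by simp
  next
    case False
    interpret quadratic_in_reciprocal "(cmod delta2)\<^sup>2" gamma "sign\<^sup>2 * ((tan tau)\<^sup>2 + 1)"
      "sig1\<^sup>2 * (cos tau)\<^sup>2 + sign\<^sup>2" "(cos tau)\<^sup>2"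
      using False trig sig by unfold_locales (auto simp: add_nonneg_pos)
    have "MSE l = q l" if "0 \<le> l" for l
      unfolding q_def using mse that False by (simp add: g_def gamma_def algebra_simps)
    moreover have "gamma \<le> 0 \<longleftrightarrow> delta1 * tan tau \<le> 0"
      using sig False by (simp add: gamma_def divide_le_0_iff mult_le_0_iff zero_le_mult_iff)
    ultimately show ?thesis using w mse False monotonicity_trichotomy[of MSE] by blast
  qed
qed

end
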